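(* Consider a memoryless channel with finite input alphabet $\mathcal X$ and arbitrary output alphabet $\mathcal Y$, with equiprobable inputs. Then for every real $k\ge1$, $$\mathbb{E}\Bigl[\bigl|i(X;Y)-I(X;Y)\bigr|^k\Bigr]\le\Bigl(2\log|\mathcal X|+\frac{k}{\ln2}\bigl(1+|\mathcal X|^{1/k}\bigr)\Bigr)^k.$$
   Context: $X$ is uniform on $\mathcal X$ and $Y$ is the channel output, so that $(X,Y)\sim P_XP_{Y|X}$. Logarithms are base 2 and $\ln$ is the natural logarithm. The information density is $$i(x;y)=\log\frac{P_{Y|X}(y|x)}{P_Y(y)},\qquad P_Y(y)=\frac1{|\mathcal X|}\sum_{x'}P_{Y|X}(y|x'),$$ and $I(X;Y)=\mathbb{E}[i(X;Y)]$ is the mutual information. *)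

theory Defs
  imports "HOL-Analysis.Analysis"
begin

text \<open>Channel with finite input alphabet (the finite type 'a, uniform input distribution)
  and arbitrary output measurable space, described by transition densities
  W x y = P_{Y|X}(y|x) with respect to a reference measure mu on the output space.\<close>

definition out_density :: "('a::finite \<Rightarrow> 'b \<Rightarrow> real) \<Rightarrow> 'b \<Rightarrow> real" where
  "out_density W y = (\<Sum>x\<in>UNIV. W x y) / real CARD('a)"

definition info_density :: "('a::finite \<Rightarrow> 'b \<Rightarrow> real) \<Rightarrow> 'a \<Rightarrow> 'b \<Rightarrow> real" where
  "info_density W x y = log 2 (W x y / out_density W y)"

definition mutual_info :: "'b measure \<Rightarrow> ('a::finite \<Rightarrow> 'b \<Rightarrow> real) \<Rightarrow> real" where
  "mutual_info \<mu> W = (\<Sum>x\<in>UNIV. \<integral>y. W x y * info_density W x y \<partial>\<mu>) / real CARD('a)"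

end

theory Submission imports Defs begin

(*
  Write n = |X|, p = P_Y, a = 2 log n and c = k/ln 2 * (1 + n^(1/k)), s = a + c.
  The proof is pointwise in the output y:
   (1) |I(X;Y)| <= log n, because each conditional divergence D(W_x || P_Y) lies in
       [0, log n] (Gibbs' inequality below, W_x <= n P_Y above);
   (2) for t = W_x(y)/P_Y(y) <= n one has |log t - I| <= a + max 0 (-log t); a
       convexity estimate for z^k splits the k-th power of this sum into a part
       linear in W_x and a part controlled by t (max 0 (-log t))^k <= (k/ln 2)^k;
   (3) hence W_x |i - I|^k <= s^(k-1) (a W_x + c P_Y); summing over x and using
       n P_Y = sum_x W_x gives at most s^k sum_x W_x, whose integral is n s^k.
*)

section \<open>Real-analysis estimates\<close>

text \<open>Convexity of z^k, applied to the point (a+b)/(a+c) written as a convex combination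
  of 1 and b/c with weights a/(a+c) and c/(a+c).\<close>
lemma powr_add_le_convex_split:
  fixes a b c k :: real
  assumes a: "a \<ge> 0" and b: "b \<ge> 0" and c: "c > 0" and k: "k \<ge> 1"
  shows "(a + b) powr k \<le> (a + c) powr (k - 1) * (a + c powr (1 - k) * b powr k)"
proof (cases "b = 0")
  case True
  have "a powr k \<le> (a + c) powr (k - 1) * a"
  proof (cases "a = 0")
    case False
    have "a powr k = a powr (k - 1) * a" using False a by (simp add: powr_diff)
    also have "\<dots> \<le> (a + c) powr (k - 1) * a"
      using a c k by (intro mult_right_mono powr_mono2) auto
    finally show ?thesis .
  qed (use k in simp)
  then show ?thesis using True k by simp
next
  case False
  define s where "s = a + c"
  have s: "s > 0" using a c s_def by simp
  define u where "u = c / s"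
  have u: "0 \<le> u" "u \<le> 1" using a c s by (auto simp: u_def s_def)
  have one_minus_u: "1 - u = a / s" using s by (simp add: u_def s_def field_simps)
  have "(1 - u) *\<^sub>R 1 + u *\<^sub>R (b / c) = a / s + (c / s) * (b / c)"
    unfolding one_minus_u by (simp add: u_def)
  also have "\<dots> = (a + b) / s" using s c by (simp add: field_simps)
  finally have combination: "(1 - u) *\<^sub>R 1 + u *\<^sub>R (b / c) = (a + b) / s" .
  have "((1 - u) *\<^sub>R 1 + u *\<^sub>R (b / c)) powr k \<le> (1 - u) * 1 powr k + u * (b / c) powr k"
    using convex_onD[OF powr_convex[OF k], of u 1 "b / c"] u b c False by simp
  then have jensen: "((a + b) / s) powr k \<le> (1 - u) + u * (b / c) powr k"
    unfolding combination by simp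
  have "(a + b) powr k = s powr k * ((a + b) / s) powr k"
    using s a b by (simp add: powr_divide)
  also have "\<dots> \<le> s powr k * ((1 - u) + u * (b / c) powr k)"
    using jensen s by (intro mult_left_mono) auto
  also have "\<dots> = s powr k * (a / s + (c / s) * (b powr k / c powr k))"
    unfolding one_minus_u using b c by (simp add: u_def powr_divide)
  also have "\<dots> = s powr (k - 1) * (a + c powr (1 - k) * b powr k)"
    using s c by (simp add: powr_diff field_simps)
  finally show ?thesis by (simp add: s_def)
qed

text \<open>The function t (-log t)^k, restricted to t < 1, is bounded by (k / ln 2)^k:
  substituting t = u^k it becomes (k u ln(1/u) / ln 2)^k, and u ln(1/u) <= 1.\<close>
lemma tail_bound:
  fixes t k :: real
  assumes t: "t > 0" and k: "k \<ge> 1"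
  shows "t * (max 0 (- log 2 t)) powr k \<le> (k / ln 2) powr k"
proof (cases "t < 1")
  case False
  then show ?thesis using k by simp
next
  case True
  define u where "u = t powr (1 / k)"
  have u: "u > 0" using t by (simp add: u_def)
  have t_eq: "t = u powr k" using t k by (simp add: u_def powr_powr)
  have "- log 2 t = k * (- ln u) / ln 2"
    using t k by (simp add: u_def ln_powr log_def)
  moreover have "- log 2 t > 0" using True t by simp
  ultimately have max_eq: "max 0 (- log 2 t) = k * (- ln u) / ln 2" by simp
  then have nonneg: "0 \<le> k * (- ln u) / ln 2" by (metis max.cobounded1)
  have "- ln u = ln (1 / u)" using u by (simp add: ln_div)
  also have "\<dots> \<le> 1 / u" using u by (intro ln_le_minus_one[THEN order_trans]) auto
  finally have u_ln_u: "u * (- ln u) \<le> 1" using u by (simp add: field_simps)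
  have "t * (max 0 (- log 2 t)) powr k = u powr k * (k * (- ln u) / ln 2) powr k"
    unfolding max_eq using t_eq by simp
  also have "\<dots> = (u * (k * (- ln u) / ln 2)) powr k"
    using powr_mult[of u "k * (- ln u) / ln 2" k] u nonneg by simp
  also have "\<dots> \<le> (k / ln 2) powr k"
  proof (rule powr_mono2)
    have "u * (k * (- ln u) / ln 2) = (u * (- ln u)) * (k / ln 2)" by simp
    also have "\<dots> \<le> 1 * (k / ln 2)" using u_ln_u k by (intro mult_right_mono) auto
    finally show "u * (k * (- ln u) / ln 2) \<le> k / ln 2" by simp
    show "0 \<le> u * (k * (- ln u) / ln 2)" using u nonneg by (intro mult_nonneg_nonneg) auto
  qed (use k in auto)
  finally show ?thesis .
qed

lemma weighted_deviation_bound: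
  fixes w p n I k c :: real
  assumes w: "w \<ge> 0" and p: "p \<ge> 0" and wp: "w \<le> n * p" and n: "n \<ge> 1"
    and I: "\<bar>I\<bar> \<le> log 2 n" and k: "k \<ge> 1" and kc: "k / ln 2 \<le> c"
  shows "w * \<bar>log 2 (w / p) - I\<bar> powr k
           \<le> (2 * log 2 n + c) powr (k - 1) * (2 * log 2 n * w + c * p)"
proof (cases "w = 0")
  case True
  have "0 < c" using kc k by (smt (verit) divide_pos_pos ln_gt_zero)
  then show ?thesis using True n p by simp
next
  case False
  define a where "a = 2 * log 2 n"
  define s where "s = a + c"
  have a: "a \<ge> 0" using n by (simp add: a_def)
  have c: "c > 0" using kc k by (smt (verit) divide_pos_pos ln_gt_zero)
  have s: "s > 0" using a c by (simp add: s_def)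
  have w_pos: "w > 0" using False w by simp
  have p_pos: "p > 0" using w_pos wp n p by (smt (verit) mult_nonneg_nonpos)
  define t where "t = w / p"
  have t: "t > 0" "t \<le> n" using w_pos p_pos wp by (auto simp: t_def field_simps)
  define b where "b = max 0 (- log 2 t)"
  have b: "b \<ge> 0" by (simp add: b_def)
  have "log 2 t \<le> log 2 n" using t by simp
  then have "\<bar>log 2 t - I\<bar> \<le> a + b"
    using I by (auto simp: a_def b_def abs_le_iff)
  then have "\<bar>log 2 t - I\<bar> powr k \<le> (a + b) powr k" using k by (intro powr_mono2) auto
  also have "\<dots> \<le> s powr (k - 1) * (a + c powr (1 - k) * b powr k)"
    unfolding s_def using powr_add_le_convex_split[OF a b c k] .
  finally have split: "\<bar>log 2 t - I\<bar> powr k \<le> s powr (k - 1) * (a + c powr (1 - k) * b powr k)" .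
  have "w * b powr k = p * (t * b powr k)" using p_pos by (simp add: t_def)
  also have "\<dots> \<le> p * (k / ln 2) powr k"
    using tail_bound[OF t(1) k] p_pos unfolding b_def by (intro mult_left_mono) auto
  also have "\<dots> \<le> p * c powr k" using kc k p_pos by (intro mult_left_mono powr_mono2) auto
  finally have tail: "w * b powr k \<le> p * c powr k" .
  have "w * \<bar>log 2 t - I\<bar> powr k \<le> w * (s powr (k - 1) * (a + c powr (1 - k) * b powr k))"
    using split w by (intro mult_left_mono) auto
  also have "\<dots> = s powr (k - 1) * (a * w + c powr (1 - k) * (w * b powr k))"
    by (simp add: algebra_simps)
  also have "\<dots> \<le> s powr (k - 1) * (a * w + c powr (1 - k) * (p * c powr k))"
    using tail s c by (intro mult_left_mono add_left_mono) auto
  also have "c powr (1 - k) * (p * c powr k) = c * p"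
    using c by (simp add: powr_diff field_simps)
  finally show ?thesis by (simp add: t_def a_def s_def)
qed

section \<open>Channels with uniform input\<close>

locale uniform_input_channel =
  fixes \<mu> :: "'b measure" and W :: "'a::finite \<Rightarrow> 'b \<Rightarrow> real"
  assumes measurable_W[measurable]: "\<And>x. W x \<in> borel_measurable \<mu>"
    and W_nonneg: "\<And>x y. y \<in> space \<mu> \<Longrightarrow> W x y \<ge> 0"
    and W_prob: "\<And>x. (\<integral>\<^sup>+ y. ennreal (W x y) \<partial>\<mu>) = 1"
begin

lemma integrable_W: "integrable \<mu> (W x)" and integral_W: "integral\<^sup>L \<mu> (W x) = 1"
  using nn_integral_eq_integrable[of "W x" \<mu> 1] W_prob W_nonneg by (simp_all add: AE_I2)

lemma out_density_measurable[measurable]: "out_density W \<in> borel_measurable \<mu>"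
  unfolding out_density_def[abs_def] by measurable

lemma info_density_measurable[measurable]: "info_density W x \<in> borel_measurable \<mu>"
  unfolding info_density_def[abs_def] by measurable

lemma out_density_nonneg: "y \<in> space \<mu> \<Longrightarrow> out_density W y \<ge> 0"
  using W_nonneg by (simp add: out_density_def sum_nonneg)

lemma W_le_card_out_density:
  assumes "y \<in> space \<mu>" shows "W x y \<le> real CARD('a) * out_density W y"
proof -
  have "W x y \<le> (\<Sum>x\<in>UNIV. W x y)"
    by (rule member_le_sum) (use W_nonneg assms in auto)
  then show ?thesis by (simp add: out_density_def)
qed

lemma out_density_pos:
  assumes "y \<in> space \<mu>" "W x y > 0" shows "out_density W y > 0"
  using W_le_card_out_density[OF assms(1), of x] assms(2) out_density_nonneg[OF assms(1)]
  by (smt (verit) mult_nonneg_nonpos of_nat_0_le_iff)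

lemma integrable_out_density: "integrable \<mu> (out_density W)"
  and integral_out_density: "integral\<^sup>L \<mu> (out_density W) = 1"
  unfolding out_density_def[abs_def] using integrable_W integral_W by auto

text \<open>Pointwise form of Gibbs' inequality, via ln z >= 1 - 1/z.\<close>
lemma W_info_density_lower:
  assumes y: "y \<in> space \<mu>"
  shows "(W x y - out_density W y) / ln 2 \<le> W x y * info_density W x y"
proof (cases "W x y = 0")
  case True then show ?thesis using out_density_nonneg[OF y] by simp
next
  case False
  let ?w = "W x y" and ?p = "out_density W y"
  have w: "?w > 0" using False W_nonneg[OF y, of x] by simp
  have p: "?p > 0" using out_density_pos[OF y w] .
  have "ln (?p / ?w) \<le> ?p / ?w - 1" using w p by (intro ln_le_minus_one) auto
  then have "1 - ?p / ?w \<le> ln (?w / ?p)" using w p by (simp add: ln_div)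
  then have "?w * (1 - ?p / ?w) \<le> ?w * ln (?w / ?p)" using w by (intro mult_left_mono) auto
  moreover have "?w * (1 - ?p / ?w) = ?w - ?p" using w by (simp add: field_simps)
  ultimately have "?w - ?p \<le> ?w * ln (?w / ?p)" by simp
  then show ?thesis by (simp add: info_density_def log_def divide_right_mono)
qed

lemma W_info_density_upper:
  assumes y: "y \<in> space \<mu>"
  shows "W x y * info_density W x y \<le> W x y * log 2 (real CARD('a))"
proof (cases "W x y = 0")
  case False
  have w: "W x y > 0" using False W_nonneg[OF y, of x] by simp
  have p: "out_density W y > 0" using out_density_pos[OF y w] .
  have "W x y / out_density W y \<le> real CARD('a)"
    using W_le_card_out_density[OF y, of x] p by (simp add: field_simps)
  then show ?thesis using w p by (simp add: info_density_def)
qed simp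

text \<open>The two pointwise bounds sandwich W x * i between integrable functions.\<close>
lemma integrable_W_info_density: "integrable \<mu> (\<lambda>y. W x y * info_density W x y)"
proof (rule Bochner_Integration.integrable_bound)
  let ?g = "\<lambda>y. W x y * log 2 (real CARD('a)) + (out_density W y + W x y) / ln 2"
  show "integrable \<mu> ?g" using integrable_W integrable_out_density by auto
  show "AE y in \<mu>. norm (W x y * info_density W x y) \<le> norm (?g y)"
  proof (rule AE_I2)
    fix y assume y: "y \<in> space \<mu>"
    have "0 \<le> W x y * log 2 (real CARD('a))" using W_nonneg[OF y] by simp
    moreover have "0 \<le> (out_density W y + W x y) / ln 2"
      using W_nonneg[OF y] out_density_nonneg[OF y] by simp
    moreover have "- ((out_density W y + W x y) / ln 2) \<le> (W x y - out_density W y) / ln 2"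
      using W_nonneg[OF y] by (simp add: divide_right_mono field_simps)
    ultimately show "norm (W x y * info_density W x y) \<le> norm (?g y)"
      using W_info_density_lower[OF y, of x] W_info_density_upper[OF y, of x]
      unfolding real_norm_def by linarith
  qed
qed measurable

lemma conditional_divergence_bounds:
  shows "0 \<le> (\<integral>y. W x y * info_density W x y \<partial>\<mu>)"
    and "(\<integral>y. W x y * info_density W x y \<partial>\<mu>) \<le> log 2 (real CARD('a))"
proof -
  have "(\<integral>y. (W x y - out_density W y) / ln 2 \<partial>\<mu>) \<le> (\<integral>y. W x y * info_density W x y \<partial>\<mu>)"
    using integrable_W integrable_out_density integrable_W_info_density W_info_density_lower
    by (intro integral_mono) auto
  then show "0 \<le> (\<integral>y. W x y * info_density W x y \<partial>\<mu>)"
    using integrable_W integral_W integrable_out_density integral_out_density by simp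
  have "(\<integral>y. W x y * info_density W x y \<partial>\<mu>) \<le> (\<integral>y. W x y * log 2 (real CARD('a)) \<partial>\<mu>)"
    using integrable_W integrable_W_info_density W_info_density_upper by (intro integral_mono) auto
  then show "(\<integral>y. W x y * info_density W x y \<partial>\<mu>) \<le> log 2 (real CARD('a))"
    using integral_W by simp
qed

lemma abs_mutual_info_le: "\<bar>mutual_info \<mu> W\<bar> \<le> log 2 (real CARD('a))"
proof -
  let ?D = "\<lambda>x. \<integral>y. W x y * info_density W x y \<partial>\<mu>"
  have "0 \<le> (\<Sum>x\<in>UNIV. ?D x)"
    using conditional_divergence_bounds(1) by (intro sum_nonneg) auto
  moreover have "(\<Sum>x\<in>UNIV. ?D x) \<le> real CARD('a) * log 2 (real CARD('a))"
    using sum_mono[of UNIV ?D "\<lambda>_. log 2 (real CARD('a))"] conditional_divergence_bounds(2)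
    by simp
  ultimately show ?thesis
    by (simp add: mutual_info_def abs_le_iff divide_le_eq mult.commute)
qed

text \<open>Summing the pointwise bound over the inputs: since |X| P_Y = sum_x W x, the two
  terms recombine into s^k sum_x W x with s = 2 log |X| + c.\<close>
lemma sum_weighted_deviation_le:
  fixes k c :: real
  assumes y: "y \<in> space \<mu>" and k: "k \<ge> 1" and kc: "k / ln 2 \<le> c"
  defines "s \<equiv> 2 * log 2 (real CARD('a)) + c"
  shows "(\<Sum>x\<in>UNIV. W x y * \<bar>info_density W x y - mutual_info \<mu> W\<bar> powr k)
           \<le> s powr k * (\<Sum>x\<in>UNIV. W x y)"
proof -
  let ?n = "real CARD('a)" and ?p = "out_density W y"
  have "0 < k / ln 2" and "0 \<le> log 2 ?n" using k by simp_all
  then have s: "s > 0" using kc unfolding s_def by linarith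
  have "(\<Sum>x\<in>UNIV. W x y * \<bar>info_density W x y - mutual_info \<mu> W\<bar> powr k)
        \<le> (\<Sum>x\<in>UNIV. s powr (k - 1) * (2 * log 2 ?n * W x y + c * ?p))"
    using weighted_deviation_bound[OF W_nonneg[OF y] out_density_nonneg[OF y]
        W_le_card_out_density[OF y] _ abs_mutual_info_le k kc]
    by (intro sum_mono) (simp add: info_density_def s_def)
  also have "\<dots> = s powr (k - 1) * (\<Sum>x\<in>UNIV. 2 * log 2 ?n * W x y + c * ?p)"
    by (simp add: sum_distrib_left)
  also have "\<dots> = s powr (k - 1) * (2 * log 2 ?n * (\<Sum>x\<in>UNIV. W x y) + c * (?n * ?p))"
    by (simp add: sum.distrib sum_distrib_left)
  also have "\<dots> = s powr (k - 1) * s * (\<Sum>x\<in>UNIV. W x y)"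
    by (simp add: out_density_def s_def algebra_simps)
  also have "\<dots> = s powr k * (\<Sum>x\<in>UNIV. W x y)"
    using s by (simp add: powr_diff)
  finally show ?thesis .
qed

lemma sum_moment_le:
  fixes k c :: real
  assumes k: "k \<ge> 1" and kc: "k / ln 2 \<le> c"
  defines "S \<equiv> (2 * log 2 (real CARD('a)) + c) powr k"
  shows "(\<Sum>x\<in>UNIV. \<integral>\<^sup>+ y. ennreal (W x y * \<bar>info_density W x y - mutual_info \<mu> W\<bar> powr k) \<partial>\<mu>)
           \<le> of_nat CARD('a) * ennreal S"
proof -
  define f where "f x y = W x y * \<bar>info_density W x y - mutual_info \<mu> W\<bar> powr k" for x y
  have S_nonneg: "0 \<le> S" by (simp add: S_def)
  have pointwise: "(\<Sum>x\<in>UNIV. ennreal (f x y)) \<le> (\<Sum>x\<in>UNIV. ennreal S * ennreal (W x y))"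
    if y: "y \<in> space \<mu>" for y
  proof -
    have "(\<Sum>x\<in>UNIV. ennreal (f x y)) = ennreal (\<Sum>x\<in>UNIV. f x y)"
      using W_nonneg[OF y] by (simp add: f_def)
    also have "\<dots> \<le> ennreal (S * (\<Sum>x\<in>UNIV. W x y))"
      using sum_weighted_deviation_le[OF y k kc] by (intro ennreal_leI) (simp add: f_def S_def)
    also have "\<dots> = (\<Sum>x\<in>UNIV. ennreal S * ennreal (W x y))"
      using W_nonneg[OF y] S_nonneg
      by (simp add: ennreal_mult[symmetric] sum_distrib_left[symmetric] sum_nonneg)
    finally show ?thesis .
  qed
  have "(\<Sum>x\<in>UNIV. \<integral>\<^sup>+ y. ennreal (f x y) \<partial>\<mu>) = (\<integral>\<^sup>+ y. (\<Sum>x\<in>UNIV. ennreal (f x y)) \<partial>\<mu>)"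
    by (rule nn_integral_sum[symmetric]) (simp add: f_def)
  also have "\<dots> \<le> (\<integral>\<^sup>+ y. (\<Sum>x\<in>UNIV. ennreal S * ennreal (W x y)) \<partial>\<mu>)"
    by (rule nn_integral_mono) (use pointwise in auto)
  also have "\<dots> = of_nat CARD('a) * ennreal S"
    by (subst nn_integral_sum) (auto simp: nn_integral_cmult W_prob)
  finally show ?thesis by (simp add: f_def)
qed

end

theorem lemma2:
  fixes \<mu> :: "'b measure" and W :: "'a::finite \<Rightarrow> 'b \<Rightarrow> real" and k :: real
  assumes meas: "\<And>x. W x \<in> borel_measurable \<mu>"
    and nonneg: "\<And>x y. y \<in> space \<mu> \<Longrightarrow> W x y \<ge> 0"
    and prob: "\<And>x. (\<integral>\<^sup>+ y. ennreal (W x y) \<partial>\<mu>) = 1"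
    and k: "k \<ge> 1"
  shows "ennreal (1 / real CARD('a)) *
           (\<Sum>x\<in>UNIV. \<integral>\<^sup>+ y. ennreal (W x y * \<bar>info_density W x y - mutual_info \<mu> W\<bar> powr k) \<partial>\<mu>)
         \<le> ennreal ((2 * log 2 (real CARD('a))
                      + k / ln 2 * (1 + real CARD('a) powr (1 / k))) powr k)"
proof -
  interpret uniform_input_channel \<mu> W using meas nonneg prob by unfold_locales
  define c where "c = k / ln 2 * (1 + real CARD('a) powr (1 / k))"
  define S where "S = (2 * log 2 (real CARD('a)) + c) powr k"
  have kc: "k / ln 2 \<le> c"
    using mult_left_mono[of 1 "1 + real CARD('a) powr (1 / k)" "k / ln 2"] k by (simp add: c_def)
  have "ennreal (1 / real CARD('a)) *
          (\<Sum>x\<in>UNIV. \<integral>\<^sup>+ y. ennreal (W x y * \<bar>info_density W x y - mutual_info \<mu> W\<bar> powr k) \<partial>\<mu>)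
      \<le> ennreal (1 / real CARD('a)) * (of_nat CARD('a) * ennreal S)"
    using sum_moment_le[OF k kc] by (intro mult_left_mono) (simp_all add: S_def)
  also have "\<dots> = ennreal S"
    by (simp add: ennreal_of_nat_eq_real_of_nat ennreal_mult[symmetric] mult.assoc[symmetric])
  finally show ?thesis by (simp add: S_def c_def)
qed

end
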